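(* Every graph of pathwidth at most $p$ is $p^2$-almost equitably $(p+1)$-colorable.
   Context: A $k$-coloring is equitable if its $k$ color classes (stable sets) have sizes pairwise differing by at most one. A graph $G$ is $q$-almost equitably $k$-colorable if there is a set $X$ of at most $q$ vertices such that $G\setminus X$ has an equitable $k$-coloring. *)

theory Defs
  imports Main
begin

definition simple_graph :: "'a set \<Rightarrow> 'a set set \<Rightarrow> bool" where
  "simple_graph V E \<longleftrightarrow> finite V \<and>
     (\<forall>e\<in>E. \<exists>u v. e = {u, v} \<and> u \<noteq> v \<and> u \<in> V \<and> v \<in> V)"

definition path_decomposition :: "'a set \<Rightarrow> 'a set set \<Rightarrow> 'a set list \<Rightarrow> bool" where
  "path_decomposition V E Bs \<longleftrightarrow>
     (\<Union>(set Bs) = V) \<and>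
     (\<forall>e\<in>E. \<exists>B\<in>set Bs. e \<subseteq> B) \<and>
     (\<forall>v i j l. i \<le> j \<and> j \<le> l \<and> l < length Bs \<and> v \<in> Bs ! i \<and> v \<in> Bs ! l
        \<longrightarrow> v \<in> Bs ! j)"

definition pd_width :: "'a set list \<Rightarrow> nat" where
  "pd_width Bs = Max (insert 0 (card ` set Bs)) - 1"

definition pathwidth_at_most :: "'a set \<Rightarrow> 'a set set \<Rightarrow> nat \<Rightarrow> bool" where
  "pathwidth_at_most V E p \<longleftrightarrow> (\<exists>Bs. path_decomposition V E Bs \<and> pd_width Bs \<le> p)"

definition proper_coloring :: "'a set \<Rightarrow> 'a set set \<Rightarrow> nat \<Rightarrow> ('a \<Rightarrow> nat) \<Rightarrow> bool" where
  "proper_coloring V E k c \<longleftrightarrow>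
     (\<forall>v\<in>V. c v < k) \<and> (\<forall>u v. {u, v} \<in> E \<longrightarrow> u \<noteq> v \<longrightarrow> c u \<noteq> c v)"

definition equitable_coloring :: "'a set \<Rightarrow> 'a set set \<Rightarrow> nat \<Rightarrow> ('a \<Rightarrow> nat) \<Rightarrow> bool" where
  "equitable_coloring V E k c \<longleftrightarrow> proper_coloring V E k c \<and>
     (\<forall>i<k. \<forall>j<k. card {v\<in>V. c v = i} \<le> card {v\<in>V. c v = j} + 1)"

definition equitably_colorable :: "'a set \<Rightarrow> 'a set set \<Rightarrow> nat \<Rightarrow> bool" where
  "equitably_colorable V E k \<longleftrightarrow> (\<exists>c. equitable_coloring V E k c)"

definition del_vertices_E :: "'a set set \<Rightarrow> 'a set \<Rightarrow> 'a set set" where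
  "del_vertices_E E X = {e\<in>E. e \<inter> X = {}}"

definition almost_equitably_colorable :: "'a set \<Rightarrow> 'a set set \<Rightarrow> nat \<Rightarrow> nat \<Rightarrow> bool" where
  "almost_equitably_colorable V E q k \<longleftrightarrow>
     (\<exists>X. X \<subseteq> V \<and> card X \<le> q \<and> equitably_colorable (V - X) (del_vertices_E E X) k)"

end

theory Submission
  imports Defs
begin

text \<open>
  Assigning to each vertex the interval of bags that contain it turns a path decomposition of
  width p into an interval supergraph of G whose cliques have at most p + 1 vertices; colouring
  greedily by left endpoints gives a proper (p + 1)-colouring. Its classes are then balanced to
  sizes q and q + 1 by induction on the number of colours. If class a is large and class b small,
  cut the line at a point m: the a-vertices lying entirely before m together with the b-vertices
  starting at or after m are independent; as m moves to the right the size of this set goes from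
  |b| to |a| without ever jumping up by more than one, so it can be given exactly q or q + 1
  vertices, and it becomes a colour class of its own.
  Deleting the at most two a- or b-vertices whose intervals straddle the cut, the remaining
  a- and b-vertices lie on opposite sides of the cut and can share one colour. Altogether at most
  2p - 1 \<le> p^2 vertices are deleted.
\<close>

lemma nat_intermediate_value:
  fixes f :: "nat \<Rightarrow> nat"
  assumes "f 0 \<le> T" "T \<le> f M" "\<And>m. f (Suc m) \<le> Suc (f m)"
  obtains m where "f m = T"
proof -
  define m0 where "m0 = (LEAST m. T \<le> f m)"
  have ge: "T \<le> f m0" unfolding m0_def by (rule LeastI[of _ M]) (use assms in auto)
  show ?thesis
  proof (cases m0)
    case 0
    then show ?thesis using ge assms(1) that by auto
  next
    case (Suc j)
    then have "\<not> T \<le> f j" unfolding m0_def by (intro not_less_Least) simp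
    then have "f m0 = T" using ge assms(3)[of j] Suc by simp
    then show ?thesis by (rule that)
  qed
qed

lemma card_eq_sum_color_classes:
  fixes c :: "'a \<Rightarrow> nat"
  assumes "finite W" "\<forall>u\<in>W. c u < k"
  shows "card W = (\<Sum>i<k. card {u\<in>W. c u = i})"
proof -
  have "W = (\<Union>i<k. {u\<in>W. c u = i})" using assms(2) by auto
  also have "card \<dots> = (\<Sum>i<k. card {u\<in>W. c u = i})"
    by (intro card_UN_disjoint) (use assms(1) in auto)
  finally show ?thesis .
qed

lemma trim_color_classes:
  fixes c :: "'a \<Rightarrow> nat"
  assumes "finite W" "\<forall>u\<in>W. c u < k" "\<forall>i<k. r \<le> card {u\<in>W. c u = i}"
  obtains X where "X \<subseteq> W" "card X = card W - k * r" "\<forall>i<k. card {u\<in>W - X. c u = i} = r"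
proof -
  have "\<forall>i\<in>{..<k}. \<exists>S. S \<subseteq> {u\<in>W. c u = i} \<and> card S = r"
    using assms(3) by (meson lessThan_iff obtain_subset_with_card_n)
  then obtain S where "\<forall>i\<in>{..<k}. S i \<subseteq> {u\<in>W. c u = i} \<and> card (S i) = r"
    by (rule bchoice[THEN exE])
  then have S: "\<And>i. i < k \<Longrightarrow> S i \<subseteq> {u\<in>W. c u = i} \<and> card (S i) = r" by simp
  define K where "K = (\<Union>i<k. S i)"
  have KW: "K \<subseteq> W" using S unfolding K_def by blast
  have "card K = (\<Sum>i<k. card (S i))"
    unfolding K_def using S assms(1) by (intro card_UN_disjoint) (auto intro: finite_subset)
  then have card_K: "card K = k * r" using S by simp
  have "finite K" using KW assms(1) finite_subset by blast
  then have "card (W - K) = card W - k * r" using KW card_K by (simp add: card_Diff_subset)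
  moreover have "{u\<in>W - (W - K). c u = i} = S i" if "i < k" for i
    using S that KW unfolding K_def by auto
  ultimately show ?thesis using that[of "W - K"] S by auto
qed

lemma exists_unused_color:
  fixes c :: "'a \<Rightarrow> nat"
  assumes "finite N" "card N < k"
  obtains d where "d < k" "d \<notin> c ` N"
proof -
  have "card (c ` N) < card {..<k}" using assms card_image_le[of N c] by simp
  then have "\<not> {..<k} \<subseteq> c ` N" using assms(1) card_mono[of "c ` N" "{..<k}"] by auto
  then show ?thesis using that by auto
qed

text \<open>Merging the last two colour classes deletes at most one straddling vertex, every other
  merge at most two.\<close>

definition deletion_bound :: "nat \<Rightarrow> nat" where
  "deletion_bound k = (if k \<le> 1 then 0 else 2 * k - 3)"

lemma deletion_bound_Suc_Suc:
  "deletion_bound (Suc (Suc k)) = deletion_bound (Suc k) + (if k = 0 then 1 else 2)"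
  by (simp add: deletion_bound_def)

lemma deletion_bound_le_square: "deletion_bound (Suc p) \<le> p ^ 2"
  by (cases p) (auto simp: deletion_bound_def power2_eq_square)

text \<open>The class split off by a merge step has q + 1 vertices exactly when the budget allows it.\<close>

lemma merge_step_budget:
  fixes n d x k q :: nat
  defines "T \<equiv> if Suc k * q + deletion_bound (Suc k) < n then Suc q else q"
  assumes "Suc k * q + deletion_bound (Suc k) \<le> n" "d + deletion_bound k \<le> deletion_bound (Suc k)"
  shows "k * q + deletion_bound k \<le> n - T - d"
    and "x \<le> max (deletion_bound k) (n - T - d - k * Suc q)
      \<Longrightarrow> d + x \<le> max (deletion_bound (Suc k)) (n - Suc k * Suc q)"
  using assms unfolding le_max_iff_disj by (auto split: if_splits)

subsection \<open>Greedy colouring of interval graphs\<close>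

text \<open>Vertex v stands for the interval [s v, e v]; the injective key refines the order of
  left endpoints and breaks ties between them.\<close>

locale interval_graph =
  fixes V :: "'a set" and s e key :: "'a \<Rightarrow> nat"
  assumes finite_V: "finite V"
    and inj_key: "inj_on key V"
    and start_mono: "\<And>u v. u \<in> V \<Longrightarrow> v \<in> V \<Longrightarrow> key u < key v \<Longrightarrow> s u \<le> s v"
    and start_le_end: "\<And>v. v \<in> V \<Longrightarrow> s v \<le> e v"
begin

definition adj :: "'a \<Rightarrow> 'a \<Rightarrow> bool" where
  "adj u v \<longleftrightarrow> s u \<le> e v \<and> s v \<le> e u"

definition proper :: "'a set \<Rightarrow> ('a \<Rightarrow> nat) \<Rightarrow> bool" where
  "proper W c \<longleftrightarrow> (\<forall>u\<in>W. \<forall>v\<in>W. u \<noteq> v \<longrightarrow> adj u v \<longrightarrow> c u \<noteq> c v)"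

definition independent :: "'a set \<Rightarrow> bool" where
  "independent Z \<longleftrightarrow> (\<forall>u\<in>Z. \<forall>v\<in>Z. u \<noteq> v \<longrightarrow> \<not> adj u v)"

definition balanced_coloring :: "'a set \<Rightarrow> nat \<Rightarrow> nat \<Rightarrow> ('a \<Rightarrow> nat) \<Rightarrow> bool" where
  "balanced_coloring W k q c \<longleftrightarrow> proper W c \<and> (\<forall>u\<in>W. c u < k) \<and>
     (\<forall>i<k. card {u\<in>W. c u = i} \<in> {q, Suc q})"

lemma adj_sym: "adj u v \<longleftrightarrow> adj v u"
  unfolding adj_def by auto

lemma adj_if_common_point: "s u \<le> x \<Longrightarrow> x \<le> e u \<Longrightarrow> s v \<le> x \<Longrightarrow> x \<le> e v \<Longrightarrow> adj u v"
  unfolding adj_def by auto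

lemma properD: "proper W c \<Longrightarrow> u \<in> W \<Longrightarrow> v \<in> W \<Longrightarrow> u \<noteq> v \<Longrightarrow> adj u v \<Longrightarrow> c u \<noteq> c v"
  unfolding proper_def by blast

lemma proper_subset: "proper W c \<Longrightarrow> W' \<subseteq> W \<Longrightarrow> proper W' c"
  unfolding proper_def by blast

lemma proper_insert:
  assumes "proper S c" "x \<notin> S" "d \<notin> c ` {u\<in>S. adj u x}"
  shows "proper (insert x S) (c(x := d))"
  using assms unfolding proper_def by (auto simp: adj_sym)

lemma proper_drop_unused_color:
  assumes "proper W g" "\<forall>u\<in>W. g u < Suc k" "\<forall>u\<in>W. g u \<noteq> b" "b < Suc k"
  obtains c where "proper W c" "\<forall>u\<in>W. c u < k"
proof
  let ?c = "\<lambda>u. if g u = k then b else g u"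
  show "proper W ?c"
    using assms(1,3) unfolding proper_def by (metis (no_types, lifting))
  show "\<forall>u\<in>W. ?c u < k"
    using assms(2-4) by (auto simp: less_Suc_eq)
qed

lemma earlier_neighbors_at_start:
  assumes "x \<in> V" "S \<subseteq> V" "x \<notin> S" "\<forall>y\<in>S. key y \<le> key x"
  shows "insert x {u\<in>S. adj u x} \<subseteq> {v\<in>V. s v \<le> s x \<and> s x \<le> e v}"
proof
  fix u assume u: "u \<in> insert x {u\<in>S. adj u x}"
  show "u \<in> {v\<in>V. s v \<le> s x \<and> s x \<le> e v}"
  proof (cases "u = x")
    case True
    then show ?thesis using assms(1) start_le_end by auto
  next
    case False
    then have "u \<in> S" "adj u x" using u by auto
    moreover have "key u \<noteq> key x" using inj_key assms \<open>u \<in> S\<close> False by (auto dest: inj_onD)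
    ultimately show ?thesis using assms start_mono[of u x] unfolding adj_def by force
  qed
qed

lemma exists_proper_coloring:
  assumes "\<And>i. card {v\<in>V. s v \<le> i \<and> i \<le> e v} \<le> k"
  obtains c where "\<forall>u\<in>V. c u < k" "proper V c"
proof -
  have "\<exists>c. (\<forall>u\<in>W. c u < k) \<and> proper W c" if "finite W" "W \<subseteq> V" for W
    using that
  proof (induction W rule: finite_ranking_induct[where f = key])
    case empty
    then show ?case unfolding proper_def by auto
  next
    case (insert x S)
    then obtain c where c: "\<forall>u\<in>S. c u < k" "proper S c" by auto
    show ?case
    proof (cases "x \<in> S")
      case True
      then show ?thesis using c by (auto simp: insert_absorb)
    next
      case False
      define N where "N = {u\<in>S. adj u x}"
      have "card (insert x N) \<le> card {v\<in>V. s v \<le> s x \<and> s x \<le> e v}"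
        using earlier_neighbors_at_start[of x S] insert False finite_V unfolding N_def
        by (intro card_mono) auto
      then have "card (insert x N) \<le> k" using assms[of "s x"] by simp
      moreover have "finite N" "x \<notin> N" using insert.hyps False unfolding N_def by auto
      ultimately have "card N < k" by simp
      then obtain d where "d < k" "d \<notin> c ` N" by (rule exists_unused_color[OF \<open>finite N\<close>])
      moreover have "proper (insert x S) (c(x := d))"
        using proper_insert[OF c(2) False] \<open>d \<notin> c ` N\<close> unfolding N_def by blast
      moreover have "\<forall>u\<in>insert x S. (c(x := d)) u < k" using c \<open>d < k\<close> by simp
      ultimately show ?thesis by blast
    qed
  qed
  then show ?thesis using finite_V that by blast
qed

subsection \<open>Balancing colour classes along a cut\<close>

definition crosses :: "'a set \<Rightarrow> nat \<Rightarrow> 'a \<Rightarrow> bool" where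
  "crosses W m u \<longleftrightarrow> key u < m \<and> (\<exists>w\<in>W. m \<le> key w \<and> adj u w)"

lemma crossing_common_point:
  assumes "W \<subseteq> V" "u \<in> W" "crosses W m u"
  obtains w where "w \<in> W" "m \<le> key w"
    "\<And>v. v \<in> W \<Longrightarrow> crosses W m v \<Longrightarrow> s v \<le> s w \<and> s w \<le> e v"
proof -
  define B where "B = {w\<in>W. m \<le> key w}"
  obtain w0 where "w0 \<in> B" using assms(3) unfolding B_def crosses_def by blast
  then obtain w where w: "w \<in> B" "\<And>w'. w' \<in> B \<Longrightarrow> s w \<le> s w'"
    using ex_has_least_nat[of "\<lambda>w. w \<in> B" w0 s] by blast
  have "s v \<le> s w \<and> s w \<le> e v" if v: "v \<in> W" "crosses W m v" for v
  proof -
    obtain w' where "w' \<in> B" "adj v w'" using v(2) unfolding crosses_def B_def by blast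
    then have "s w \<le> e v" using w(2) unfolding adj_def by fastforce
    moreover have "s v \<le> s w"
      using start_mono[of v w] assms(1) v w(1) unfolding crosses_def B_def by auto
    ultimately show ?thesis by simp
  qed
  then show ?thesis using that w(1) unfolding B_def by blast
qed

lemma crossing_unique:
  assumes "W \<subseteq> V" "proper W c" "u \<in> W" "v \<in> W" "crosses W m u" "crosses W m v" "c u = c v"
  shows "u = v"
proof -
  obtain w where "\<And>x. x \<in> W \<Longrightarrow> crosses W m x \<Longrightarrow> s x \<le> s w \<and> s w \<le> e x"
    using crossing_common_point[OF assms(1,3,5)] by blast
  then have "adj u v" using assms(3-6) adj_if_common_point by blast
  then show ?thesis using properD[OF assms(2-4)] assms(7) by blast
qed

text \<open>With only two colours a single interval can cross a cut: two crossing intervals and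
  the earliest-starting interval beyond the cut would form a triangle.\<close>

lemma crossing_unique_two_colors:
  assumes "W \<subseteq> V" "proper W c" "\<forall>x\<in>W. c x < 2" "u \<in> W" "v \<in> W"
    "crosses W m u" "crosses W m v"
  shows "u = v"
proof (rule ccontr)
  assume "u \<noteq> v"
  then have "c u \<noteq> c v" using crossing_unique[OF assms(1,2,4,5,6,7)] by blast
  obtain w where w: "w \<in> W" "m \<le> key w"
    and point: "\<And>x. x \<in> W \<Longrightarrow> crosses W m x \<Longrightarrow> s x \<le> s w \<and> s w \<le> e x"
    using crossing_common_point[OF assms(1,4,6)] by blast
  have "s w \<le> e w" using start_le_end w(1) assms(1) by blast
  then have "adj u w" "adj v w" using point assms(4-7) adj_if_common_point by blast+
  moreover have "u \<noteq> w" "v \<noteq> w" using w(2) assms(6,7) unfolding crosses_def by auto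
  ultimately have "c u \<noteq> c w" "c v \<noteq> c w" using properD[OF assms(2)] assms(4,5) w(1) by blast+
  moreover have "c u < 2" "c v < 2" "c w < 2" using assms(3-5) w(1) by blast+
  ultimately show False using \<open>c u \<noteq> c v\<close> by linarith
qed

definition cut_left :: "'a set \<Rightarrow> ('a \<Rightarrow> nat) \<Rightarrow> nat \<Rightarrow> nat \<Rightarrow> 'a set" where
  "cut_left W c a m = {u\<in>W. c u = a \<and> key u < m \<and> \<not> crosses W m u}"

definition cut_right :: "'a set \<Rightarrow> ('a \<Rightarrow> nat) \<Rightarrow> nat \<Rightarrow> nat \<Rightarrow> 'a set" where
  "cut_right W c b m = {u\<in>W. c u = b \<and> m \<le> key u}"

text \<open>A vertex entering the left side when the cut moves from m to m + 1 is either the vertex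
  of key m or crosses the cut m only through that vertex.\<close>

lemma cut_left_Suc_new_unique:
  assumes "W \<subseteq> V" "proper W c"
    and "x \<in> cut_left W c a (Suc m) - cut_left W c a m"
    and "y \<in> cut_left W c a (Suc m) - cut_left W c a m"
  shows "x = y"
proof -
  let ?R = "cut_left W c a (Suc m) - cut_left W c a m"
  have R: "u \<in> W" "c u = a" "key u \<le> m" if "u \<in> ?R" for u
    using that unfolding cut_left_def by auto
  have R_before: "crosses W m u" "\<not> crosses W (Suc m) u" if "u \<in> ?R" "key u < m" for u
    using that unfolding cut_left_def by auto
  have one_before: "u = v" if uv: "u \<in> ?R" "v \<in> ?R" "key u < m" "key v = m" for u v
  proof (rule ccontr)
    assume "u \<noteq> v"
    obtain w where "w \<in> W" "m \<le> key w" "adj u w" "\<not> Suc m \<le> key w"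
      using R_before[OF uv(1,3)] uv(3) unfolding crosses_def by auto
    then have "key w = key v" using uv(4) by simp
    then have "w = v" using inj_onD[OF inj_key] assms(1) \<open>w \<in> W\<close> R(1)[OF uv(2)] by blast
    then have "adj u v" using \<open>adj u w\<close> by simp
    moreover have "c u = c v" using R(2)[OF uv(1)] R(2)[OF uv(2)] by simp
    ultimately show False using properD[OF assms(2) R(1)[OF uv(1)] R(1)[OF uv(2)] \<open>u \<noteq> v\<close>] by simp
  qed
  have "key x \<le> m" "key y \<le> m" using R(3) assms(3,4) by blast+
  then consider "key x = m" "key y = m" | "key x < m" "key y = m" | "key x = m" "key y < m"
    | "key x < m" "key y < m" by linarith
  then show ?thesis
  proof cases
    case 1
    then show ?thesis using inj_onD[OF inj_key] assms(1) R(1) assms(3,4) by (metis subsetD)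
  next
    case 2
    then show ?thesis using one_before assms(3,4) by blast
  next
    case 3
    then show ?thesis using one_before[of y x] assms(3,4) by simp
  next
    case 4
    then have "crosses W m x" "crosses W m y" using R_before assms(3,4) by blast+
    then show ?thesis using crossing_unique[OF assms(1,2)] R(1,2) assms(3,4) by metis
  qed
qed

lemma card_cut_left_Suc_le:
  assumes "W \<subseteq> V" "proper W c"
  shows "card (cut_left W c a (Suc m)) \<le> Suc (card (cut_left W c a m))"
proof -
  define R where "R = cut_left W c a (Suc m) - cut_left W c a m"
  have finite_W: "finite W" using assms(1) finite_V finite_subset by blast
  then have "card R \<le> 1" using cut_left_Suc_new_unique[OF assms] card_le_Suc0_iff_eq[of R]
    unfolding R_def cut_left_def by auto
  moreover have "card (cut_left W c a (Suc m)) \<le> card (cut_left W c a m \<union> R)"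
    using finite_W unfolding R_def cut_left_def by (intro card_mono) auto
  moreover have "card (cut_left W c a m \<union> R) \<le> card (cut_left W c a m) + card R"
    by (rule card_Un_le)
  ultimately show ?thesis by linarith
qed

lemma exists_cut_of_size:
  assumes "W \<subseteq> V" "proper W c" "card {u\<in>W. c u = b} \<le> T" "T \<le> card {u\<in>W. c u = a}"
  obtains m where "card (cut_left W c a m) + card (cut_right W c b m) = T"
proof -
  define F where "F m = card (cut_left W c a m) + card (cut_right W c b m)" for m
  have finite_W: "finite W" using assms(1) finite_V finite_subset by blast
  obtain M where M: "\<forall>u\<in>W. key u < M"
    using finite_W finite_nat_set_iff_bounded[of "key ` W"] by auto
  have "F 0 = card {u\<in>W. c u = b}" unfolding F_def cut_left_def cut_right_def by simp
  moreover have "cut_left W c a M = {u\<in>W. c u = a}" "cut_right W c b M = {}"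
    using M unfolding cut_left_def cut_right_def crosses_def by fastforce+
  then have "F M = card {u\<in>W. c u = a}" unfolding F_def by simp
  moreover have "F (Suc m) \<le> Suc (F m)" for m
  proof -
    have "card (cut_right W c b (Suc m)) \<le> card (cut_right W c b m)"
      using finite_W unfolding cut_right_def by (intro card_mono) auto
    then show ?thesis using card_cut_left_Suc_le[OF assms(1,2), of a m] unfolding F_def by linarith
  qed
  ultimately have "F 0 \<le> T" "T \<le> F M" "\<And>m. F (Suc m) \<le> Suc (F m)" using assms(3,4) by auto
  then obtain m where "F m = T" by (rule nat_intermediate_value)
  then show ?thesis using that unfolding F_def by blast
qed

lemma cut_independent:
  assumes "proper W c"
  shows "independent (cut_left W c a m \<union> cut_right W c b m)"
  unfolding independent_def
proof (intro ballI impI)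
  fix u v assume "u \<in> cut_left W c a m \<union> cut_right W c b m"
    "v \<in> cut_left W c a m \<union> cut_right W c b m" "u \<noteq> v"
  have left_right: "\<not> adj x y" if "x \<in> cut_left W c a m" "y \<in> cut_right W c b m" for x y
    using that unfolding cut_left_def cut_right_def crosses_def by blast
  have same_color: "\<not> adj x y" if "x \<in> W" "y \<in> W" "x \<noteq> y" "c x = c y" for x y
    using properD[OF assms] that by blast
  consider "u \<in> cut_left W c a m" "v \<in> cut_left W c a m"
    | "u \<in> cut_right W c b m" "v \<in> cut_right W c b m"
    | "u \<in> cut_left W c a m" "v \<in> cut_right W c b m"
    | "u \<in> cut_right W c b m" "v \<in> cut_left W c a m"
    using \<open>u \<in> _\<close> \<open>v \<in> _\<close> by blast
  then show "\<not> adj u v"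
  proof cases
    case 1
    then show ?thesis using same_color \<open>u \<noteq> v\<close> unfolding cut_left_def by auto
  next
    case 2
    then show ?thesis using same_color \<open>u \<noteq> v\<close> unfolding cut_right_def by auto
  next
    case 3
    then show ?thesis using left_right by blast
  next
    case 4
    then show ?thesis using left_right adj_sym by blast
  qed
qed

lemma card_crossing_two_classes:
  assumes "W \<subseteq> V" "proper W c" "\<forall>u\<in>W. c u < Suc k" "a < Suc k" "b < Suc k" "a \<noteq> b"
  shows "card {u\<in>W. (c u = a \<or> c u = b) \<and> crosses W m u} + deletion_bound k
    \<le> deletion_bound (Suc k)"
proof -
  define D where "D i = {u\<in>W. c u = i \<and> crosses W m u}" for i
  have finite_W: "finite W" using assms(1) finite_V finite_subset by blast
  have D_ab: "{u\<in>W. (c u = a \<or> c u = b) \<and> crosses W m u} = D a \<union> D b" unfolding D_def by blast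
  obtain k' where k: "k = Suc k'" using assms(4-6) by (cases k) auto
  show ?thesis
  proof (cases "k' = 0")
    case True
    then have "\<forall>u\<in>W. c u < 2" using assms(3) k by (simp add: numeral_2_eq_2)
    then have "\<forall>x\<in>D a \<union> D b. \<forall>y\<in>D a \<union> D b. x = y"
      using crossing_unique_two_colors[OF assms(1,2)] unfolding D_def by blast
    then have "card (D a \<union> D b) \<le> Suc 0"
      using finite_W card_le_Suc0_iff_eq[of "D a \<union> D b"] unfolding D_def by auto
    then show ?thesis using True k D_ab by (simp add: deletion_bound_Suc_Suc)
  next
    case False
    have D_le: "card (D i) \<le> 1" for i
    proof -
      have "\<forall>x\<in>D i. \<forall>y\<in>D i. x = y" using crossing_unique[OF assms(1,2)] unfolding D_def by blast
      then show ?thesis using finite_W card_le_Suc0_iff_eq[of "D i"] unfolding D_def by auto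
    qed
    then have "card (D a \<union> D b) \<le> 2"
      using card_Un_le[of "D a" "D b"] D_le[of a] D_le[of b] by linarith
    then show ?thesis using False k D_ab by (simp add: deletion_bound_Suc_Suc)
  qed
qed

lemma proper_merge_at_cut:
  assumes "proper W c" "W' \<subseteq> W"
    and "\<And>u. u \<in> W' \<Longrightarrow> key u < m \<Longrightarrow> c u \<noteq> a"
    and "\<And>u. u \<in> W' \<Longrightarrow> crosses W m u \<Longrightarrow> c u \<noteq> b"
  shows "proper W' (\<lambda>u. if key u < m \<and> c u = b then a else c u)"
  unfolding proper_def
proof (intro ballI impI)
  fix u v assume uv: "u \<in> W'" "v \<in> W'" "u \<noteq> v" "adj u v"
  have "c u \<noteq> c v" using properD[OF assms(1)] uv assms(2) by blast
  have no_merge_conflict: False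
    if "x \<in> W'" "y \<in> W'" "adj x y" "key x < m" "c x = b" "c y = a" for x y
  proof -
    have "\<not> key y < m" using assms(3) that by blast
    moreover have "y \<in> W" using that(2) assms(2) by blast
    ultimately have "crosses W m x" using that(3,4) unfolding crosses_def by (auto simp: not_less)
    then show False using assms(4) that by blast
  qed
  show "(if key u < m \<and> c u = b then a else c u) \<noteq> (if key v < m \<and> c v = b then a else c v)"
    using no_merge_conflict[of u v] no_merge_conflict[of v u] uv adj_sym \<open>c u \<noteq> c v\<close> by auto
qed

lemma merge_two_classes:
  assumes W: "W \<subseteq> V" "proper W c" "\<forall>u\<in>W. c u < Suc k"
    and ab: "a < Suc k" "b < Suc k" "a \<noteq> b"
    and T: "card {u\<in>W. c u = b} \<le> T" "T \<le> card {u\<in>W. c u = a}"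
  obtains Z D c' where "Z \<subseteq> W" "D \<subseteq> W" "Z \<inter> D = {}" "card Z = T" "independent Z"
    "card D + deletion_bound k \<le> deletion_bound (Suc k)"
    "proper (W - (Z \<union> D)) c'" "\<forall>u\<in>W - (Z \<union> D). c' u < k"
proof -
  obtain m where m: "card (cut_left W c a m) + card (cut_right W c b m) = T"
    using exists_cut_of_size[OF W(1,2) T] by blast
  define Z where "Z = cut_left W c a m \<union> cut_right W c b m"
  define D where "D = {u\<in>W. (c u = a \<or> c u = b) \<and> crosses W m u}"
  define g where "g u = (if key u < m \<and> c u = b then a else c u)" for u
  have finite_W: "finite W" using W(1) finite_V finite_subset by blast
  have Z_sub: "Z \<subseteq> W" and D_sub: "D \<subseteq> W"
    unfolding Z_def D_def cut_left_def cut_right_def by auto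
  have card_Z: "card Z = T"
    using m finite_W unfolding Z_def cut_left_def cut_right_def by (subst card_Un_disjoint) auto
  have disjoint: "Z \<inter> D = {}" unfolding Z_def D_def cut_left_def cut_right_def crosses_def by auto
  have "proper (W - (Z \<union> D)) g" unfolding g_def
    by (rule proper_merge_at_cut[OF W(2)]) (auto simp: Z_def D_def cut_left_def)
  moreover have "\<forall>u\<in>W - (Z \<union> D). g u < Suc k" "\<forall>u\<in>W - (Z \<union> D). g u \<noteq> b"
    using W(3) ab unfolding g_def Z_def cut_right_def by auto
  ultimately obtain c' where c': "proper (W - (Z \<union> D)) c'" "\<forall>u\<in>W - (Z \<union> D). c' u < k"
    using proper_drop_unused_color[OF _ _ _ ab(2)] by blast
  have "independent Z" unfolding Z_def by (rule cut_independent[OF W(2)])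
  moreover have "card D + deletion_bound k \<le> deletion_bound (Suc k)"
    unfolding D_def by (rule card_crossing_two_classes[OF W ab])
  ultimately show ?thesis by (rule that[OF Z_sub D_sub disjoint card_Z _ _ c'])
qed

lemma balanced_coloring_add_class:
  assumes "balanced_coloring W k q c" "independent Z" "Z \<inter> W = {}" "card Z \<in> {q, Suc q}"
  shows "balanced_coloring (Z \<union> W) (Suc k) q (\<lambda>u. if u \<in> Z then k else c u)"
proof -
  have c: "proper W c" "\<forall>u\<in>W. c u < k" "\<forall>i<k. card {u\<in>W. c u = i} \<in> {q, Suc q}"
    using assms(1) unfolding balanced_coloring_def by auto
  have "proper (Z \<union> W) (\<lambda>u. if u \<in> Z then k else c u)"
    unfolding proper_def
  proof (intro ballI impI)
    fix u v assume uv: "u \<in> Z \<union> W" "v \<in> Z \<union> W" "u \<noteq> v" "adj u v"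
    have "\<not> (u \<in> Z \<and> v \<in> Z)" using assms(2) uv(3,4) unfolding independent_def by blast
    moreover have "c u \<noteq> c v" if "u \<in> W" "v \<in> W" using properD[OF c(1) that uv(3,4)] .
    ultimately show "(if u \<in> Z then k else c u) \<noteq> (if v \<in> Z then k else c v)"
      using uv(1,2) c(2) by (cases "u \<in> Z"; cases "v \<in> Z") auto
  qed
  moreover have "{u\<in>Z \<union> W. (if u \<in> Z then k else c u) = k} = Z" using c(2) by auto
  moreover have "{u\<in>Z \<union> W. (if u \<in> Z then k else c u) = i} = {u\<in>W. c u = i}" if "i < k" for i
    using that assms(3) by auto
  ultimately show ?thesis
    using c(2,3) assms(4) unfolding balanced_coloring_def by (auto simp: less_Suc_eq)
qed

definition balanceable :: "'a set \<Rightarrow> nat \<Rightarrow> nat \<Rightarrow> bool" where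
  "balanceable W k q \<longleftrightarrow> (\<exists>X c. X \<subseteq> W \<and> card X \<le> max (deletion_bound k) (card W - k * Suc q)
     \<and> balanced_coloring (W - X) k q c)"

lemma balanceable_if_classes_large:
  assumes "finite W" "proper W c" "\<forall>u\<in>W. c u < k" "\<forall>i<k. Suc q \<le> card {u\<in>W. c u = i}"
  shows "balanceable W k q"
proof -
  obtain X where "X \<subseteq> W" "card X = card W - k * Suc q" "\<forall>i<k. card {u\<in>W - X. c u = i} = Suc q"
    using trim_color_classes[OF assms(1,3,4)] by blast
  then show ?thesis using proper_subset[OF assms(2)] assms(3)
    unfolding balanceable_def balanced_coloring_def by (intro exI[of _ X] exI[of _ c]) auto
qed

lemma balanceable_if_classes_small:
  assumes "finite W" "proper W c" "\<forall>u\<in>W. c u < k" "\<forall>i<k. card {u\<in>W. c u = i} \<le> q"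
    and "k * q \<le> card W"
  shows "balanceable W k q"
proof -
  have "card {u\<in>W. c u = i} = q" if "i < k" for i
  proof (rule ccontr)
    assume "card {u\<in>W. c u = i} \<noteq> q"
    then have "(\<Sum>j<k. card {u\<in>W. c u = j}) < (\<Sum>j<k. q)"
      using assms(4) that le_neq_implies_less
      by (intro sum_strict_mono_ex1) (auto intro!: bexI[of _ i])
    then show False using card_eq_sum_color_classes[OF assms(1,3)] assms(5) by simp
  qed
  then show ?thesis using assms(2,3)
    unfolding balanceable_def balanced_coloring_def by (intro exI[of _ "{}"] exI[of _ c]) auto
qed

lemma balanceable_by_merge:
  assumes IH: "\<And>W c. W \<subseteq> V \<Longrightarrow> proper W c \<Longrightarrow> \<forall>u\<in>W. c u < k \<Longrightarrow>
      k * q + deletion_bound k \<le> card W \<Longrightarrow> balanceable W k q"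
    and W: "W \<subseteq> V" "proper W c" "\<forall>u\<in>W. c u < Suc k"
      "Suc k * q + deletion_bound (Suc k) \<le> card W"
    and ab: "a < Suc k" "b < Suc k" "Suc q \<le> card {u\<in>W. c u = a}" "card {u\<in>W. c u = b} \<le> q"
  shows "balanceable W (Suc k) q"
proof -
  define T where "T = (if Suc k * q + deletion_bound (Suc k) < card W then Suc q else q)"
  have T: "card {u\<in>W. c u = b} \<le> T" "T \<le> card {u\<in>W. c u = a}" using ab(3,4) unfolding T_def by auto
  have "a \<noteq> b" using ab(3,4) by auto
  then obtain Z D c' where ZD: "Z \<subseteq> W" "D \<subseteq> W" "Z \<inter> D = {}" "card Z = T" "independent Z"
    "card D + deletion_bound k \<le> deletion_bound (Suc k)"
    and c': "proper (W - (Z \<union> D)) c'" "\<forall>u\<in>W - (Z \<union> D). c' u < k"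
    using merge_two_classes[OF W(1-3) ab(1,2) _ T] by blast
  define W' where "W' = W - (Z \<union> D)"
  have "finite W" using W(1) finite_V finite_subset by blast
  then have "finite Z" "finite D" using ZD(1,2) finite_subset by blast+
  then have card_W': "card W' = card W - T - card D"
    using ZD(1-4) unfolding W'_def by (simp add: card_Diff_subset card_Un_disjoint)
  have "k * q + deletion_bound k \<le> card W - T - card D"
    using merge_step_budget(1)[OF W(4) ZD(6)] unfolding T_def .
  then have "k * q + deletion_bound k \<le> card W'" using card_W' by simp
  then obtain X' c'' where X': "X' \<subseteq> W'"
    "card X' \<le> max (deletion_bound k) (card W' - k * Suc q)" "balanced_coloring (W' - X') k q c''"
    using IH[of W' c'] W(1) c' unfolding W'_def balanceable_def by blast
  have "card (D \<union> X') \<le> card D + card X'" by (rule card_Un_le)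
  also have "\<dots> \<le> max (deletion_bound (Suc k)) (card W - Suc k * Suc q)"
    using merge_step_budget(2)[OF W(4) ZD(6) X'(2)[unfolded card_W' T_def]] .
  finally have "card (D \<union> X') \<le> max (deletion_bound (Suc k)) (card W - Suc k * Suc q)" .
  moreover have "W - (D \<union> X') = Z \<union> (W' - X')" using ZD(1,3) X'(1) unfolding W'_def by blast
  moreover have "Z \<inter> (W' - X') = {}" "card Z \<in> {q, Suc q}"
    using ZD(4) unfolding W'_def T_def by auto
  then have "balanced_coloring (Z \<union> (W' - X')) (Suc k) q (\<lambda>u. if u \<in> Z then k else c'' u)"
    by (rule balanced_coloring_add_class[OF X'(3) ZD(5)])
  moreover have "D \<union> X' \<subseteq> W" using ZD(2) X'(1) unfolding W'_def by blast
  ultimately show ?thesis unfolding balanceable_def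
    by (intro exI[of _ "D \<union> X'"] exI[of _ "\<lambda>u. if u \<in> Z then k else c'' u"]) simp
qed

lemma balanceable_if_proper:
  assumes "W \<subseteq> V" "proper W c" "\<forall>u\<in>W. c u < k" "k * q + deletion_bound k \<le> card W"
  shows "balanceable W k q"
  using assms
proof (induction k arbitrary: W c)
  case 0
  then show ?case by (intro balanceable_if_classes_small) (auto intro: finite_subset finite_V)
next
  case (Suc k)
  have finite_W: "finite W" using Suc.prems(1) finite_V finite_subset by blast
  consider "\<forall>i<Suc k. Suc q \<le> card {u\<in>W. c u = i}" | "\<forall>i<Suc k. card {u\<in>W. c u = i} \<le> q"
    | a b where "a < Suc k" "b < Suc k" "Suc q \<le> card {u\<in>W. c u = a}" "card {u\<in>W. c u = b} \<le> q"
    by (meson not_less_eq_eq)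
  then show ?case
  proof cases
    case 1
    then show ?thesis using balanceable_if_classes_large[OF finite_W Suc.prems(2,3)] by blast
  next
    case 2
    then show ?thesis using balanceable_if_classes_small[OF finite_W Suc.prems(2,3)] Suc.prems(4)
      by simp
  next
    case 3
    with Suc.IH Suc.prems show ?thesis by (rule balanceable_by_merge)
  qed
qed

lemma almost_equitable_coloring:
  assumes "\<And>i. card {v\<in>V. s v \<le> i \<and> i \<le> e v} \<le> Suc p"
  obtains X q c where "X \<subseteq> V" "card X \<le> deletion_bound (Suc p)"
    "balanced_coloring (V - X) (Suc p) q c"
proof (cases "card V < deletion_bound (Suc p)")
  case True
  have "balanced_coloring (V - V) (Suc p) 0 (\<lambda>_. 0)"
    unfolding balanced_coloring_def proper_def by simp
  then show ?thesis using that[of V] True by simp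
next
  case False
  obtain c where c: "\<forall>u\<in>V. c u < Suc p" "proper V c" using exists_proper_coloring[OF assms] .
  define q where "q = (card V - deletion_bound (Suc p)) div Suc p"
  have "Suc p * q \<le> card V - deletion_bound (Suc p)"
    unfolding q_def by (rule times_div_less_eq_dividend)
  moreover have "card V - deletion_bound (Suc p) < Suc p * Suc q"
    unfolding q_def using dividend_less_times_div[of "Suc p" "card V - deletion_bound (Suc p)"]
    by simp
  ultimately have size: "Suc p * q + deletion_bound (Suc p) \<le> card V"
    and rest: "card V - Suc p * Suc q \<le> deletion_bound (Suc p)" using False by linarith+
  from size have "balanceable V (Suc p) q" by (rule balanceable_if_proper[OF subset_refl c(2) c(1)])
  then obtain X c' where "X \<subseteq> V" "card X \<le> deletion_bound (Suc p)"
    "balanced_coloring (V - X) (Suc p) q c'"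
    using rest unfolding balanceable_def by (auto simp: max_def split: if_splits)
  then show ?thesis by (rule that)
qed

lemma equitable_coloring_if_balanced:
  assumes "balanced_coloring W k q c"
    and "\<And>u v. {u, v} \<in> F \<Longrightarrow> u \<noteq> v \<Longrightarrow> u \<in> W \<and> v \<in> W \<and> adj u v"
  shows "equitable_coloring W F k c"
proof -
  have c: "proper W c" "\<forall>u\<in>W. c u < k" "\<forall>i<k. card {u\<in>W. c u = i} \<in> {q, Suc q}"
    using assms(1) unfolding balanced_coloring_def by auto
  have "c u \<noteq> c v" if "{u, v} \<in> F" "u \<noteq> v" for u v
    using assms(2)[OF that] properD[OF c(1)] that(2) by blast
  moreover have "card {v\<in>W. c v = i} \<le> card {v\<in>W. c v = j} + 1" if "i < k" "j < k" for i j
    using c(3)[rule_format, OF that(1)] c(3)[rule_format, OF that(2)] by auto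
  ultimately show ?thesis
    using c(2) unfolding equitable_coloring_def proper_coloring_def by blast
qed

end

subsection \<open>Path decompositions\<close>

lemma simple_graph_edge_vertices:
  assumes "simple_graph V E" "{u, v} \<in> E"
  shows "u \<in> V \<and> v \<in> V"
proof -
  obtain x y where "{u, v} = {x, y}" "x \<in> V" "y \<in> V"
    using assms unfolding simple_graph_def by blast
  then show ?thesis by (auto simp: doubleton_eq_iff)
qed

lemma path_decomposition_intervals:
  assumes "path_decomposition V E Bs"
  obtains s e :: "'a \<Rightarrow> nat" where "\<And>v. v \<in> V \<Longrightarrow> s v \<le> e v" "\<And>v. v \<in> V \<Longrightarrow> e v < length Bs"
    "\<And>v l. v \<in> V \<Longrightarrow> l < length Bs \<Longrightarrow> v \<in> Bs ! l \<longleftrightarrow> s v \<le> l \<and> l \<le> e v"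
proof -
  define I where "I v = {l. l < length Bs \<and> v \<in> Bs ! l}" for v
  have finite_I: "finite (I v)" for v unfolding I_def by simp
  have cover: "\<Union>(set Bs) = V"
    and consecutive: "\<And>v i j l. i \<le> j \<Longrightarrow> j \<le> l \<Longrightarrow> l < length Bs \<Longrightarrow> v \<in> Bs ! i \<Longrightarrow> v \<in> Bs ! l
      \<Longrightarrow> v \<in> Bs ! j"
    using assms unfolding path_decomposition_def by blast+
  have ends: "Min (I v) \<in> I v" "Max (I v) \<in> I v" if v: "v \<in> V" for v
  proof -
    obtain l where "l < length Bs" "v \<in> Bs ! l" using v cover by (auto simp: in_set_conv_nth)
    then have "I v \<noteq> {}" unfolding I_def by blast
    then show "Min (I v) \<in> I v" "Max (I v) \<in> I v" using finite_I by simp_all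
  qed
  have mem: "v \<in> Bs ! l \<longleftrightarrow> Min (I v) \<le> l \<and> l \<le> Max (I v)" if "v \<in> V" "l < length Bs" for v l
  proof
    assume "v \<in> Bs ! l"
    then have "l \<in> I v" using that(2) unfolding I_def by simp
    then show "Min (I v) \<le> l \<and> l \<le> Max (I v)" using finite_I by simp
  next
    assume "Min (I v) \<le> l \<and> l \<le> Max (I v)"
    moreover have "Max (I v) < length Bs" "v \<in> Bs ! Min (I v)" "v \<in> Bs ! Max (I v)"
      using ends[OF that(1)] unfolding I_def by simp_all
    ultimately show "v \<in> Bs ! l" using consecutive by blast
  qed
  have "Min (I v) \<le> Max (I v)" if "v \<in> V" for v
    using Max_ge[OF finite_I ends(1)[OF that]] .
  moreover have "Max (I v) < length Bs" if "v \<in> V" for v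
    using ends(2)[OF that] unfolding I_def by simp
  ultimately show ?thesis using mem by (rule that)
qed

lemma exists_key_refining:
  fixes s :: "'a \<Rightarrow> nat"
  assumes "finite V"
  obtains key :: "'a \<Rightarrow> nat"
  where "inj_on key V" "\<And>u v. u \<in> V \<Longrightarrow> v \<in> V \<Longrightarrow> key u < key v \<Longrightarrow> s u \<le> s v"
proof -
  obtain f :: "'a \<Rightarrow> nat" and n where f: "f ` V = {i. i < n}" "inj_on f V"
    using finite_imp_inj_to_nat_seg[OF assms] by blast
  have f_less: "f v < n" if "v \<in> V" for v using f(1) that by auto
  define key where "key v = s v * n + f v" for v
  have "inj_on key V"
  proof (rule inj_onI)
    fix u v assume uv: "u \<in> V" "v \<in> V" "key u = key v"
    then have "key u mod n = key v mod n" by simp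
    then have "f u = f v" using f_less uv(1,2) unfolding key_def by simp
    then show "u = v" using inj_onD[OF f(2)] uv(1,2) by blast
  qed
  moreover have "s u \<le> s v" if "u \<in> V" "v \<in> V" "key u < key v" for u v
  proof (rule ccontr)
    assume "\<not> s u \<le> s v"
    then have "Suc (s v) * n \<le> s u * n" by (intro mult_le_mono1) simp
    moreover have "key v < Suc (s v) * n" using f_less[OF that(2)] unfolding key_def by simp
    ultimately show False using that(3) unfolding key_def by linarith
  qed
  ultimately show ?thesis by (rule that)
qed

lemma card_bag_le_pd_width:
  assumes "B \<in> set Bs"
  shows "card B \<le> Suc (pd_width Bs)"
proof -
  have "card B \<le> Max (insert 0 (card ` set Bs))" using assms by (intro Max_ge) auto
  then show ?thesis unfolding pd_width_def by linarith
qed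

lemma path_decomposition_interval_graph:
  assumes "simple_graph V E" "path_decomposition V E Bs"
  obtains s e key where "interval_graph V s e key"
    "\<And>u v. {u, v} \<in> E \<Longrightarrow> interval_graph.adj s e u v"
    "\<And>i. card {v\<in>V. s v \<le> i \<and> i \<le> e v} \<le> Suc (pd_width Bs)"
proof -
  have finite_V: "finite V" using assms(1) unfolding simple_graph_def by blast
  obtain s e :: "'a \<Rightarrow> nat" where se: "\<And>v. v \<in> V \<Longrightarrow> s v \<le> e v" "\<And>v. v \<in> V \<Longrightarrow> e v < length Bs"
    "\<And>v l. v \<in> V \<Longrightarrow> l < length Bs \<Longrightarrow> v \<in> Bs ! l \<longleftrightarrow> s v \<le> l \<and> l \<le> e v"
    using path_decomposition_intervals[OF assms(2)] by blast
  obtain key :: "'a \<Rightarrow> nat" where key: "inj_on key V"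
    "\<And>u v. u \<in> V \<Longrightarrow> v \<in> V \<Longrightarrow> key u < key v \<Longrightarrow> s u \<le> s v"
    using exists_key_refining[OF finite_V, where s = s] by blast
  have ig: "interval_graph V s e key" by (rule interval_graph.intro[OF finite_V key se(1)])
  have adj: "interval_graph.adj s e u v" if uv: "{u, v} \<in> E" for u v
  proof -
    obtain B where "B \<in> set Bs" "{u, v} \<subseteq> B"
      using assms(2) uv unfolding path_decomposition_def by blast
    then obtain j where j: "j < length Bs" "u \<in> Bs ! j" "v \<in> Bs ! j" by (auto simp: in_set_conv_nth)
    have "u \<in> V" "v \<in> V" using simple_graph_edge_vertices[OF assms(1) uv] by auto
    then have "s u \<le> j \<and> j \<le> e u" "s v \<le> j \<and> j \<le> e v" using se(3) j by blast+
    then show ?thesis using interval_graph.adj_if_common_point[OF ig] by blast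
  qed
  have clique: "card {v\<in>V. s v \<le> i \<and> i \<le> e v} \<le> Suc (pd_width Bs)" for i
  proof (cases "i < length Bs")
    case True
    then have "{v\<in>V. s v \<le> i \<and> i \<le> e v} \<subseteq> Bs ! i" using se(3) by blast
    moreover have "Bs ! i \<subseteq> V"
      using assms(2) nth_mem[OF True] unfolding path_decomposition_def by blast
    ultimately have "card {v\<in>V. s v \<le> i \<and> i \<le> e v} \<le> card (Bs ! i)"
      using finite_subset[OF _ finite_V] by (intro card_mono) auto
    also have "\<dots> \<le> Suc (pd_width Bs)" using True by (intro card_bag_le_pd_width) simp
    finally show ?thesis .
  next
    case False
    have "\<not> i \<le> e v" if "v \<in> V" for v using se(2)[OF that] False by linarith
    then have "{v\<in>V. s v \<le> i \<and> i \<le> e v} = {}" by blast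
    then show ?thesis by (metis card.empty zero_le)
  qed
  show ?thesis by (rule that[OF ig adj clique])
qed

theorem corollary1:
  fixes V :: "'a set" and E :: "'a set set" and p :: nat
  assumes "simple_graph V E" and "pathwidth_at_most V E p"
  shows "almost_equitably_colorable V E (p ^ 2) (p + 1)"
proof -
  obtain Bs where pd: "path_decomposition V E Bs" and width: "pd_width Bs \<le> p"
    using assms(2) unfolding pathwidth_at_most_def by blast
  obtain s e key where ig: "interval_graph V s e key"
    and edge_adj: "\<And>u v. {u, v} \<in> E \<Longrightarrow> interval_graph.adj s e u v"
    and clique: "\<And>i. card {v\<in>V. s v \<le> i \<and> i \<le> e v} \<le> Suc (pd_width Bs)"
    using path_decomposition_interval_graph[OF assms(1) pd] by blast
  interpret interval_graph V s e key by (rule ig)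
  have "card {v\<in>V. s v \<le> i \<and> i \<le> e v} \<le> Suc p" for i using clique[of i] width by linarith
  then obtain X q c where X: "X \<subseteq> V" "card X \<le> deletion_bound (Suc p)"
    and balanced: "balanced_coloring (V - X) (Suc p) q c"
    by (rule almost_equitable_coloring)
  have "equitable_coloring (V - X) (del_vertices_E E X) (Suc p) c"
  proof (rule equitable_coloring_if_balanced[OF balanced])
    fix u v assume "{u, v} \<in> del_vertices_E E X" "u \<noteq> v"
    then show "u \<in> V - X \<and> v \<in> V - X \<and> adj u v"
      using simple_graph_edge_vertices[OF assms(1)] edge_adj unfolding del_vertices_E_def by blast
  qed
  then show ?thesis
    using X deletion_bound_le_square[of p]
    unfolding almost_equitably_colorable_def equitably_colorable_def by (auto intro!: exI[of _ X])
qed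

end
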